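(* Let $i<j$ be two consecutive $c$-positions in a word $u$ (i.e. $u$ has label $c$ at $i$ and $j$ and no $c$ strictly between them) with attributes $(x_i,y_i)$ and $(x_j,y_j)$, respectively. If $x_j > x_i$, then $r^u_j = r^u_i \mathsf{X}_c$.
   Context: $A$ is a finite alphabet. An $\mathsf{X}$-ranker is a nonempty word over $\{\mathsf{X}_a : a\in A\}$, evaluated on a word $w$ by: $\mathsf{X}_a(w)$ is the smallest $a$-position of $w$ and $r\mathsf{X}_a(w)$ is the smallest $a$-position greater than $r(w)$ (possibly undefined); $\mathsf{Y}$-rankers are defined symmetrically with "previous $a$-position". The attribute of position $i$ is $(x_i,y_i)$, with $x_i$ the length of a shortest $\mathsf{X}$-ranker reaching $i$ and $y_i$ the length of a shortest $\mathsf{Y}$-ranker reaching $i$. Let $R^u_i$ be the set of $\mathsf{X}$-rankers $r$ with $r(u)=i$ and $|r|=x_i$. The canonical $\mathsf{X}$-ranker $r^u_i\in R^u_i$ is defined by minimizing visited positions from right to left: $S_{x_i}=R^u_i$, and for $j<x_i$, letting $p_j$ be the minimal position of $u$ visited by the length-$j$ prefixes of rankers in $S_{j+1}$, $S_j$ consists of the rankers in $S_{j+1}$ whose length-$j$ prefix visits $p_j$; then $S_1=\{r^u_i\}$. *)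

theory Defs
  imports Main
begin

text \<open>Words are lists; positions are 0-indexed (0 ..< length u).
  A ranker is a nonempty list of letters: the list [a1,...,ak] stands for
  X_a1 X_a2 ... X_ak (resp. Y_a1 ... Y_ak).\<close>

definition nxt :: "'a list \<Rightarrow> 'a \<Rightarrow> nat \<Rightarrow> nat option" where
  "nxt u a lb = (if \<exists>q. lb \<le> q \<and> q < length u \<and> u ! q = a
                 then Some (LEAST q. lb \<le> q \<and> q < length u \<and> u ! q = a) else None)"

definition prv :: "'a list \<Rightarrow> 'a \<Rightarrow> nat \<Rightarrow> nat option" where
  "prv u a ub = (if \<exists>q. q < ub \<and> q < length u \<and> u ! q = a
                 then Some (GREATEST q. q < ub \<and> q < length u \<and> u ! q = a) else None)"

definition evalX :: "'a list \<Rightarrow> 'a list \<Rightarrow> nat option" where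
  "evalX u r = (if r = [] then None else
     foldl (\<lambda>po a. case po of None \<Rightarrow> None | Some p \<Rightarrow> nxt u a (Suc p)) (nxt u (hd r) 0) (tl r))"

definition evalY :: "'a list \<Rightarrow> 'a list \<Rightarrow> nat option" where
  "evalY u r = (if r = [] then None else
     foldl (\<lambda>po a. case po of None \<Rightarrow> None | Some p \<Rightarrow> prv u a p) (prv u (hd r) (length u)) (tl r))"

definition xattr :: "'a list \<Rightarrow> nat \<Rightarrow> nat" where
  "xattr u i = (LEAST n. \<exists>r. r \<noteq> [] \<and> length r = n \<and> evalX u r = Some i)"

definition yattr :: "'a list \<Rightarrow> nat \<Rightarrow> nat" where
  "yattr u i = (LEAST n. \<exists>r. r \<noteq> [] \<and> length r = n \<and> evalY u r = Some i)"

definition Rset :: "'a list \<Rightarrow> nat \<Rightarrow> 'a list set" where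
  "Rset u i = {r. r \<noteq> [] \<and> length r = xattr u i \<and> evalX u r = Some i}"

text \<open>Sdown u i d = S_{x_i - d}: S_{x_i} = R^u_i and S_j is obtained from S_{j+1} by keeping
  the rankers whose length-j prefix visits the minimal position p_j.\<close>
fun Sdown :: "'a list \<Rightarrow> nat \<Rightarrow> nat \<Rightarrow> 'a list set" where
  "Sdown u i 0 = Rset u i"
| "Sdown u i (Suc d) =
     (let j = xattr u i - Suc d;
          P = Sdown u i d;
          p = Min {q. \<exists>r\<in>P. evalX u (take j r) = Some q}
      in {r \<in> P. evalX u (take j r) = Some p})"

definition canonX :: "'a list \<Rightarrow> nat \<Rightarrow> 'a list" where
  "canonX u i = (THE r. r \<in> Sdown u i (xattr u i - 1))"

end

theory Submission
  imports Defs
begin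

text \<open>Since \<open>X\<^sub>c\<close> maps \<open>i\<close> to \<open>j\<close>, appending \<open>c\<close> to a shortest ranker for \<open>i\<close> reaches \<open>j\<close>,
  so \<open>x\<^sub>j = x\<^sub>i + 1\<close>. A shortest ranker for \<open>j\<close> ends in \<open>c\<close>, and its prefix of length \<open>x\<^sub>i\<close>
  reaches a position \<open>q\<close> with no \<open>c\<close> in \<open>(q, j)\<close>, so \<open>q \<ge> i\<close>. Hence the first selection
  step for \<open>j\<close> picks \<open>p = i\<close> and leaves exactly \<open>R\<^sup>u\<^sub>i X\<^sub>c\<close>. All later steps only inspect
  prefixes of length \<open>< x\<^sub>i\<close>, which do not see the appended \<open>X\<^sub>c\<close>, so the selection for \<open>j\<close>
  runs in lockstep with the one for \<open>i\<close>.\<close>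

lemma nxt_SomeD: "nxt u a lb = Some q \<Longrightarrow> lb \<le> q \<and> q < length u \<and> u ! q = a"
  unfolding nxt_def by (metis (mono_tags, lifting) LeastI_ex option.distinct(1) option.inject)

lemma nxt_Some_le:
  assumes "nxt u a lb = Some q" "lb \<le> k" "k < length u" "u ! k = a"
  shows "q \<le> k"
  using assms unfolding nxt_def by (metis (mono_tags, lifting) Least_le option.distinct(1) option.inject)

lemma nxt_eqI:
  assumes "lb \<le> q" "q < length u" "u ! q = a" "\<forall>k. lb \<le> k \<and> k < q \<longrightarrow> u ! k \<noteq> a"
  shows "nxt u a lb = Some q"
proof -
  have "(LEAST q. lb \<le> q \<and> q < length u \<and> u ! q = a) = q"
    by (rule Least_equality) (use assms in \<open>auto simp: not_less[symmetric]\<close>)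
  then show ?thesis using assms unfolding nxt_def by auto
qed

lemma evalX_Nil [simp]: "evalX u [] = None"
  by (simp add: evalX_def)

lemma evalX_Some_nonempty: "evalX u r = Some p \<Longrightarrow> r \<noteq> []"
  by auto

lemma evalX_singleton: "evalX u [a] = nxt u a 0"
  by (simp add: evalX_def)

lemma evalX_snoc:
  "r \<noteq> [] \<Longrightarrow> evalX u (r @ [a]) = (case evalX u r of None \<Rightarrow> None | Some p \<Rightarrow> nxt u a (Suc p))"
  by (cases r) (auto simp: evalX_def)

lemma evalX_SomeD: "evalX u r = Some p \<Longrightarrow> p < length u \<and> u ! p = last r"
proof (induction r arbitrary: p rule: rev_induct)
  case (snoc a r)
  show ?case
  proof (cases "r = []")
    case True
    then show ?thesis using snoc.prems nxt_SomeD[of u a 0 p] by (simp add: evalX_singleton)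
  next
    case False
    then obtain p' where "nxt u a (Suc p') = Some p"
      using snoc.prems by (auto simp: evalX_snoc split: option.splits)
    then show ?thesis using nxt_SomeD by fastforce
  qed
qed simp

lemma evalX_take_defined: "evalX u r \<noteq> None \<Longrightarrow> 0 < k \<Longrightarrow> evalX u (take k r) \<noteq> None"
proof (induction r rule: rev_induct)
  case (snoc a r)
  show ?case
  proof (cases "k \<le> length r")
    case True
    with snoc.prems have "r \<noteq> []" by auto
    with snoc.prems have "evalX u r \<noteq> None"
      by (auto simp: evalX_snoc split: option.splits)
    with True snoc show ?thesis by simp
  qed (use snoc.prems in simp)
qed simp

text \<open>A defined ranker is determined by the positions its nonempty prefixes visit, since each
  visited position carries the last letter of the prefix.\<close>
lemma eq_if_evalX_take_eq:
  assumes "length r = length r'" "evalX u r \<noteq> None"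
    and "\<forall>k>0. evalX u (take k r) = evalX u (take k r')"
  shows "r = r'"
proof (rule nth_equalityI)
  fix n assume n: "n < length r"
  obtain q where q: "evalX u (take (Suc n) r) = Some q"
    using evalX_take_defined[OF assms(2), of "Suc n"] by auto
  moreover have "evalX u (take (Suc n) r') = Some q"
    using assms(3) q by (metis zero_less_Suc)
  ultimately have "last (take (Suc n) r) = last (take (Suc n) r')"
    using evalX_SomeD by metis
  then show "r ! n = r' ! n"
    using n assms(1) by (simp add: take_Suc_conv_app_nth)
qed (rule assms(1))

lemma evalX_take_Suc_self: "p < length u \<Longrightarrow> evalX u (take (Suc p) u) = Some p"
proof (induction p)
  case 0
  then have "take (Suc 0) u = [u ! 0]" by (cases u) auto
  moreover have "nxt u (u ! 0) 0 = Some 0" by (rule nxt_eqI) (use 0 in auto)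
  ultimately show ?case by (simp add: evalX_singleton)
next
  case (Suc p)
  have "take (Suc (Suc p)) u = take (Suc p) u @ [u ! Suc p]"
    using Suc.prems by (simp add: take_Suc_conv_app_nth)
  moreover have "take (Suc p) u \<noteq> []" using Suc.prems by (cases u) auto
  moreover have "nxt u (u ! Suc p) (Suc p) = Some (Suc p)" by (rule nxt_eqI) (use Suc.prems in auto)
  ultimately show ?case using Suc by (simp add: evalX_snoc)
qed

lemma xattr_le: "r \<noteq> [] \<Longrightarrow> evalX u r = Some p \<Longrightarrow> xattr u p \<le> length r"
  unfolding xattr_def by (rule Least_le) blast

lemma Rset_nonempty:
  assumes "p < length u"
  shows "Rset u p \<noteq> {}"
proof -
  have "\<exists>n r. r \<noteq> [] \<and> length r = n \<and> evalX u r = Some p"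
    using evalX_take_Suc_self[OF assms] assms by (intro exI[of _ "Suc p"] exI[of _ "take (Suc p) u"]) auto
  then have "\<exists>r. r \<noteq> [] \<and> length r = xattr u p \<and> evalX u r = Some p"
    unfolding xattr_def by (rule LeastI_ex)
  then show ?thesis by (auto simp: Rset_def)
qed

lemma xattr_pos: "p < length u \<Longrightarrow> 0 < xattr u p"
  using Rset_nonempty[of p u] by (auto simp: Rset_def) (metis length_greater_0_conv)

definition restrict_min_visit :: "'a list \<Rightarrow> nat \<Rightarrow> 'a list set \<Rightarrow> 'a list set" where
  "restrict_min_visit u k P =
     {r \<in> P. evalX u (take k r) = Some (Min {q. \<exists>r\<in>P. evalX u (take k r) = Some q})}"

lemma Sdown_Suc_eq: "Sdown u p (Suc d) = restrict_min_visit u (xattr u p - Suc d) (Sdown u p d)"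
  by (simp add: restrict_min_visit_def Let_def)

declare Sdown.simps(2) [simp del]

lemma restrict_min_visit_subset: "restrict_min_visit u k P \<subseteq> P"
  by (auto simp: restrict_min_visit_def)

lemma restrict_min_visit_evalX_take_eq:
  "r \<in> restrict_min_visit u k P \<Longrightarrow> r' \<in> restrict_min_visit u k P
    \<Longrightarrow> evalX u (take k r) = evalX u (take k r')"
  by (simp add: restrict_min_visit_def)

lemma finite_evalX_take_values: "finite {q. \<exists>r\<in>P. evalX u (take k r) = Some q}"
  by (rule finite_subset[of _ "{..<length u}"]) (auto dest: evalX_SomeD)

lemma restrict_min_visit_nonempty:
  assumes "P \<noteq> {}" and "\<forall>r\<in>P. evalX u (take k r) \<noteq> None"
  shows "restrict_min_visit u k P \<noteq> {}"
proof -
  have "{q. \<exists>r\<in>P. evalX u (take k r) = Some q} \<noteq> {}" using assms by auto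
  then have "Min {q. \<exists>r\<in>P. evalX u (take k r) = Some q} \<in> {q. \<exists>r\<in>P. evalX u (take k r) = Some q}"
    using finite_evalX_take_values by (rule Min_in[rotated])
  then show ?thesis by (auto simp: restrict_min_visit_def)
qed

lemma restrict_min_visit_eq:
  assumes "\<exists>r\<in>P. evalX u (take k r) = Some m"
    and "\<forall>r\<in>P. \<forall>q. evalX u (take k r) = Some q \<longrightarrow> m \<le> q"
  shows "restrict_min_visit u k P = {r \<in> P. evalX u (take k r) = Some m}"
proof -
  have "Min {q. \<exists>r\<in>P. evalX u (take k r) = Some q} = m"
    using assms finite_evalX_take_values by (intro Min_eqI) auto
  then show ?thesis by (simp add: restrict_min_visit_def)
qed

lemma restrict_min_visit_image:
  assumes "\<forall>s\<in>P. take k (g s) = take k s"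
  shows "restrict_min_visit u k (g ` P) = g ` restrict_min_visit u k P"
proof -
  have "{q. \<exists>r\<in>g ` P. evalX u (take k r) = Some q} = {q. \<exists>r\<in>P. evalX u (take k r) = Some q}"
    using assms by auto
  then show ?thesis using assms by (auto simp: restrict_min_visit_def)
qed

lemma Sdown_subset_Rset: "Sdown u p d \<subseteq> Rset u p"
  by (induction d) (auto simp: Sdown_Suc_eq dest: restrict_min_visit_subset[THEN subsetD])

lemma Sdown_nonempty: "p < length u \<Longrightarrow> d < xattr u p \<Longrightarrow> Sdown u p d \<noteq> {}"
proof (induction d)
  case (Suc d)
  have "evalX u (take (xattr u p - Suc d) r) \<noteq> None" if "r \<in> Sdown u p d" for r
  proof -
    have "evalX u r = Some p" using that Sdown_subset_Rset by (auto simp: Rset_def)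
    then show ?thesis using evalX_take_defined[of u r "xattr u p - Suc d"] Suc.prems by simp
  qed
  with Suc show ?case by (simp add: Sdown_Suc_eq restrict_min_visit_nonempty)
qed (simp add: Rset_nonempty)

lemma Sdown_evalX_take_eq:
  "r \<in> Sdown u p d \<Longrightarrow> r' \<in> Sdown u p d \<Longrightarrow> xattr u p - d \<le> k
    \<Longrightarrow> evalX u (take k r) = evalX u (take k r')"
proof (induction d arbitrary: k)
  case 0
  then show ?case by (simp add: Rset_def)
next
  case (Suc d)
  show ?case
  proof (cases "k = xattr u p - Suc d")
    case True
    then show ?thesis
      using Suc.prems(1,2) restrict_min_visit_evalX_take_eq by (metis Sdown_Suc_eq)
  next
    case False
    then have "xattr u p - d \<le> k" using Suc.prems(3) by linarith
    moreover have "r \<in> Sdown u p d" "r' \<in> Sdown u p d"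
      using Suc.prems restrict_min_visit_subset by (auto simp: Sdown_Suc_eq)
    ultimately show ?thesis using Suc.IH by blast
  qed
qed

lemma Sdown_canonX: "p < length u \<Longrightarrow> Sdown u p (xattr u p - 1) = {canonX u p}"
proof -
  assume p: "p < length u"
  let ?S = "Sdown u p (xattr u p - 1)"
  obtain a where a: "a \<in> ?S"
    using Sdown_nonempty[OF p] xattr_pos[OF p] by fastforce
  have "b = a" if b: "b \<in> ?S" for b
  proof (rule eq_if_evalX_take_eq)
    have "a \<in> Rset u p" "b \<in> Rset u p" using a b Sdown_subset_Rset by blast+
    then show "length b = length a" "evalX u b \<noteq> None" by (simp_all add: Rset_def)
    show "\<forall>k>0. evalX u (take k b) = evalX u (take k a)"
      using Sdown_evalX_take_eq[OF b a] by simp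
  qed
  with a have "?S = {a}" by blast
  then show ?thesis by (simp add: canonX_def)
qed

lemma xattr_next_le:
  assumes "nxt u c (Suc i) = Some j" and "i < length u"
  shows "xattr u j \<le> Suc (xattr u i)"
proof -
  obtain s where s: "s \<in> Rset u i" using Rset_nonempty[OF assms(2)] by blast
  then have "evalX u (s @ [c]) = Some j" using assms(1) by (simp add: Rset_def evalX_snoc)
  then show ?thesis using xattr_le[of "s @ [c]"] s by (simp add: Rset_def)
qed

lemma take_Suc_length_snoc_last: "length r = Suc n \<Longrightarrow> take n r @ [last r] = r"
  by (metis append_butlast_last_id butlast_conv_take diff_Suc_1 length_0_conv nat.distinct(1))

context
  fixes u :: "'a list" and c :: 'a and i j :: nat
  assumes next_c: "nxt u c (Suc i) = Some j"
    and c_at_i: "u ! i = c"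
    and xattr_next: "xattr u j = Suc (xattr u i)"
begin

lemma Rset_snoc_next: "s \<in> Rset u i \<Longrightarrow> s @ [c] \<in> Rset u j"
  using next_c xattr_next by (simp add: Rset_def evalX_snoc)

text \<open>The prefix of a shortest ranker for \<open>j\<close> cannot visit a position before \<open>i\<close>: from there,
  \<open>X\<^sub>c\<close> would stop at the \<open>c\<close>-position \<open>i\<close> rather than at \<open>j\<close>.\<close>
lemma Rset_next_prefix_ge:
  assumes r: "r \<in> Rset u j" and q: "evalX u (take (xattr u i) r) = Some q"
  shows "i \<le> q"
proof (rule ccontr)
  assume "\<not> i \<le> q"
  have j: "Suc i \<le> j" "j < length u" "u ! j = c" using nxt_SomeD[OF next_c] by auto
  have len: "length r = Suc (xattr u i)" and ev: "evalX u r = Some j"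
    using r xattr_next by (auto simp: Rset_def)
  have "last r = c" using evalX_SomeD[OF ev] j by simp
  then have split: "take (xattr u i) r @ [c] = r" using take_Suc_length_snoc_last[OF len] by simp
  have "take (xattr u i) r \<noteq> []" using q by (rule evalX_Some_nonempty)
  from evalX_snoc[OF this, of u c] have "nxt u c (Suc q) = Some j"
    using q split ev by simp
  then have "j \<le> i"
    by (rule nxt_Some_le) (use \<open>\<not> i \<le> q\<close> j c_at_i in auto)
  with j show False by simp
qed

lemma Sdown_next_one: "Sdown u j (Suc 0) = (\<lambda>s. s @ [c]) ` Rset u i"
proof -
  have "i < length u" using nxt_SomeD[OF next_c] by simp
  then obtain s0 where s0: "s0 \<in> Rset u i" using Rset_nonempty by blast
  have take_snoc: "take (xattr u i) (s @ [c]) = s" if "s \<in> Rset u i" for s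
    using that by (simp add: Rset_def)
  have "Sdown u j (Suc 0) = restrict_min_visit u (xattr u i) (Rset u j)"
    by (simp add: Sdown_Suc_eq xattr_next)
  also have "\<dots> = {r \<in> Rset u j. evalX u (take (xattr u i) r) = Some i}"
  proof (rule restrict_min_visit_eq)
    have "s0 @ [c] \<in> Rset u j" "evalX u (take (xattr u i) (s0 @ [c])) = Some i"
      using Rset_snoc_next[OF s0] take_snoc[OF s0] s0 by (simp_all add: Rset_def)
    then show "\<exists>r\<in>Rset u j. evalX u (take (xattr u i) r) = Some i" by blast
  qed (simp add: Rset_next_prefix_ge)
  also have "\<dots> = (\<lambda>s. s @ [c]) ` Rset u i"
  proof (intro equalityI subsetI)
    fix r assume r: "r \<in> {r \<in> Rset u j. evalX u (take (xattr u i) r) = Some i}"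
    then have len: "length r = Suc (xattr u i)" and ev: "evalX u r = Some j"
      using xattr_next by (auto simp: Rset_def)
    have "last r = c" using evalX_SomeD[OF ev] nxt_SomeD[OF next_c] by simp
    then have "r = take (xattr u i) r @ [c]" using take_Suc_length_snoc_last[OF len] by simp
    moreover have "take (xattr u i) r \<in> Rset u i"
      using r len evalX_Some_nonempty[of u "take (xattr u i) r"] by (auto simp: Rset_def)
    ultimately show "r \<in> (\<lambda>s. s @ [c]) ` Rset u i" by blast
  next
    fix r assume "r \<in> (\<lambda>s. s @ [c]) ` Rset u i"
    then obtain s where s: "s \<in> Rset u i" and r: "r = s @ [c]" by blast
    then have "evalX u s = Some i" by (simp add: Rset_def)
    then show "r \<in> {r \<in> Rset u j. evalX u (take (xattr u i) r) = Some i}"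
      using Rset_snoc_next[OF s] take_snoc[OF s] r by simp
  qed
  finally show ?thesis .
qed

lemma Sdown_next: "d < xattr u i \<Longrightarrow> Sdown u j (Suc d) = (\<lambda>s. s @ [c]) ` Sdown u i d"
proof (induction d)
  case 0
  then show ?case by (simp add: Sdown_next_one)
next
  case (Suc d)
  have "\<forall>s\<in>Sdown u i d. take (xattr u i - Suc d) (s @ [c]) = take (xattr u i - Suc d) s"
    using Sdown_subset_Rset Suc.prems by (fastforce simp: Rset_def)
  then show ?case
    using Suc by (simp add: Sdown_Suc_eq[of u j] Sdown_Suc_eq[of u i] xattr_next restrict_min_visit_image)
qed

end

theorem lemma6:
  fixes u :: "'a list" and c :: 'a and i j :: nat
  assumes "i < j" and "j < length u"
    and "u ! i = c" and "u ! j = c"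
    and "\<forall>k. i < k \<and> k < j \<longrightarrow> u ! k \<noteq> c"
    and "xattr u j > xattr u i"
  shows "canonX u j = canonX u i @ [c]"
proof -
  have i: "i < length u" using assms by simp
  have next_c: "nxt u c (Suc i) = Some j" by (rule nxt_eqI) (use assms in auto)
  then have xj: "xattr u j = Suc (xattr u i)" using xattr_next_le[OF _ i] assms(6) by fastforce
  have "{canonX u j} = Sdown u j (xattr u j - 1)"
    using Sdown_canonX[OF assms(2)] by simp
  also have "\<dots> = (\<lambda>s. s @ [c]) ` Sdown u i (xattr u i - 1)"
    using Sdown_next[OF next_c assms(3) xj, of "xattr u i - 1"] xattr_pos[OF i] xj by simp
  also have "\<dots> = {canonX u i @ [c]}"
    using Sdown_canonX[OF i] by simp
  finally show ?thesis by simp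
qed

end
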